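(* Let $X$ and $Y$ be real Hilbert spaces and let $I$ be either $[0,T]$ with $T>0$ or $\mathbb{R}_+=[0,+\infty)$. Assume: (K) $K\subset X$ is a nonempty closed convex cone. (A) $A:X\to X$ satisfies, for some constants $m_A>0$, $L_A>0$: $(Au-Av,u-v)_X\ge m_A\|u-v\|_X^2$ and $\|Au-Av\|_X\le L_A\|u-v\|_X$ for all $u,v\in X$. (R) $\mathcal{R}:C(I;X)\to C(I;Y)$ and for every compact set $\mathcal{J}\subset I$ there exist $l^{\mathcal R}_{\mathcal J}>0$, $L^{\mathcal R}_{\mathcal J}>0$ with $\|\mathcal{R}u_1(t)-\mathcal{R}u_2(t)\|_Y\le l^{\mathcal R}_{\mathcal J}\|u_1(t)-u_2(t)\|_X+L^{\mathcal R}_{\mathcal J}\int_0^t\|u_1(s)-u_2(s)\|_X\,ds$ for all $u_1,u_2\in C(I;X)$, $t\in\mathcal J$. (S) $\mathcal{S}:C(I;X)\to C(I;X)$ and for every compact set $\mathcal{J}\subset I$ there exist $l^{\mathcal S}_{\mathcal J}>0$, $L^{\mathcal S}_{\mathcal J}>0$ with $\|\mathcal{S}u_1(t)-\mathcal{S}u_2(t)\|_X\le l^{\mathcal S}_{\mathcal J}\|u_1(t)-u_2(t)\|_X+L^{\mathcal S}_{\mathcal J}\int_0^t\|u_1(s)-u_2(s)\|_X\,ds$ for all $u_1,u_2\in C(I;X)$, $t\in\mathcal J$. (j) $j:Y\times K\to\mathbb{R}$ is such that (a) for every $\eta\in Y$, $j(\eta,\cdot):K\to\mathbb{R}$ is convex,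 positively homogeneous and Lipschitz continuous; (b) there is $\alpha_j\ge 0$ with $j(\eta_1,v_2)-j(\eta_1,v_1)+j(\eta_2,v_1)-j(\eta_2,v_2)\le\alpha_j\|\eta_1-\eta_2\|_Y\|v_1-v_2\|_X$ for all $\eta_1,\eta_2\in Y$, $v_1,v_2\in K$. (f) $f\in C(I;X)$. Assume moreover that for every compact set $\mathcal J\subset I$, $(\alpha_j+1)(l^{\mathcal R}_{\mathcal J}+l^{\mathcal S}_{\mathcal J})<m_A$. Then there exists a unique function $u:I\to X$ such that $$-u(t)\in \mathrm{N}_{C(\mathcal{R}u(t),t)}\big(Au(t)+\mathcal{S}u(t)\big)\quad\forall\,t\in I,$$ and this solution satisfies $u\in C(I;K)$.
   Context: $C(I;Z)$ denotes the space of continuous functions $I\to Z$, and $\mathcal{R}u(t)$ means $(\mathcal{R}u)(t)$. For a nonempty closed convex set $D\subset X$, the normal cone is $\mathrm{N}_D(x)=\{\xi\in X:(\xi,v-x)_X\le 0\ \forall v\in D\}$ if $x\in D$ and $\mathrm{N}_D(x)=\emptyset$ if $x\notin D$. Given $j$, define $J:Y\times X\to(-\infty,+\infty]$ by $J(\eta,v)=j(\eta,v)$ if $v\in K$ and $J(\eta,v)=+\infty$ if $v\notin K$; set $C(\eta)=\{\xi\in X: J(\eta,v)\ge(\xi,v)_X\ \forall v\in X\}$ (the convex subdifferential of $J(\eta,\cdot)$ at $0_X$) and $C(\eta,t)=f(t)-C(\eta)$ for $\eta\in Y$, $t\in I$. *)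

theory Defs
  imports "HOL-Analysis.Analysis"
begin

definition normal_cone :: "'a::real_inner set \<Rightarrow> 'a \<Rightarrow> 'a set" where
  "normal_cone D x = (if x \<in> D then {\<xi>. \<forall>v\<in>D. inner \<xi> (v - x) \<le> 0} else {})"

definition Jext :: "'x set \<Rightarrow> ('y \<Rightarrow> 'x \<Rightarrow> real) \<Rightarrow> 'y \<Rightarrow> 'x \<Rightarrow> ereal" where
  "Jext K j \<eta> v = (if v \<in> K then ereal (j \<eta> v) else \<infinity>)"

text \<open>C(eta): convex subdifferential of J(eta,.) at 0.\<close>
definition Cset :: "'x::real_inner set \<Rightarrow> ('y \<Rightarrow> 'x \<Rightarrow> real) \<Rightarrow> 'y \<Rightarrow> 'x set" where
  "Cset K j \<eta> = {\<xi>. \<forall>v. Jext K j \<eta> v \<ge> ereal (inner \<xi> v)}"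

definition Cset_t :: "'x::real_inner set \<Rightarrow> ('y \<Rightarrow> 'x \<Rightarrow> real) \<Rightarrow> (real \<Rightarrow> 'x) \<Rightarrow> 'y \<Rightarrow> real \<Rightarrow> 'x set" where
  "Cset_t K j f \<eta> t = (\<lambda>\<xi>. f t - \<xi>) ` Cset K j \<eta>"

end

theory Submission
  imports Defs
begin

(* At time t the inclusion says that u(t) solves the elliptic variational inequality
     u(t) in K,  (A u(t) - g, v - u(t)) + j(eta, v) - j(eta, u(t)) >= 0  for all v in K,
   where eta = R u(t) and g = f(t) - S u(t): since j(eta, .) is sublinear on the cone K, C(eta) consists
   of the linear minorants of j(eta, .) on K, and w lies in the normal cone to C(eta) at xi iff w is in K
   and xi is a subgradient of j(eta, .) at w.  For fixed (eta, g) the variational inequality has a unique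
   solution P(eta, g), obtained as the fixed point of a contractive proximal iteration, and monotonicity
   gives  m_A |P(eta1, g1) - P(eta2, g2)| <= |g1 - g2| + alpha_j |eta1 - eta2|.
   The problem becomes u = Lambda u with Lambda u(t) = P(R u(t), f(t) - S u(t)), and by the smallness
   condition Lambda satisfies on every [0, T]
     |Lambda u1(t) - Lambda u2(t)| <= q |u1(t) - u2(t)| + M int_0^t |u1 - u2|   with q < 1.
   Measured with the weight exp(beta t) such an operator contracts, so the Picard iterates converge
   uniformly on every [0, T] to a continuous fixed point, and two continuous fixed points coincide. *)

section \<open>Elliptic variational inequalities\<close>

definition evi_solution :: "'a::real_inner set \<Rightarrow> ('a \<Rightarrow> 'a) \<Rightarrow> ('a \<Rightarrow> real) \<Rightarrow> 'a \<Rightarrow> 'a \<Rightarrow> bool"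
  where "evi_solution K A \<phi> g p \<longleftrightarrow> p \<in> K \<and> (\<forall>v\<in>K. 0 \<le> inner (A p - g) (v - p) + \<phi> v - \<phi> p)"

lemma power2_norm_add_scaleR:
  fixes a b :: "'a::real_inner"
  shows "(norm (a + t *\<^sub>R b))\<^sup>2 = (norm a)\<^sup>2 + 2 * t * inner a b + t\<^sup>2 * (norm b)\<^sup>2"
  unfolding power2_norm_eq_inner
  by (simp add: inner_add_left inner_add_right inner_commute power2_eq_square algebra_simps)

lemma power2_norm_midpoint_diff:
  fixes x y h :: "'a::real_inner"
  shows "(norm ((1/2) *\<^sub>R (x + y) - h))\<^sup>2 = (norm (x - h))\<^sup>2 / 2 + (norm (y - h))\<^sup>2 / 2 - (norm (x - y))\<^sup>2 / 4"
  unfolding power2_norm_eq_inner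
  by (simp add: inner_add_left inner_add_right inner_diff_left inner_diff_right inner_commute field_simps)

lemma midpoint_strongly_convex_attains_min:
  fixes K :: "'a::{real_normed_vector,complete_space} set" and \<Phi> :: "'a \<Rightarrow> real"
  assumes K: "K \<noteq> {}" "closed K" "convex K"
    and bdd: "bdd_below (\<Phi> ` K)" and cont: "continuous_on K \<Phi>" and c: "0 < c"
    and mid: "\<And>x y. x \<in> K \<Longrightarrow> y \<in> K \<Longrightarrow>
      \<Phi> ((1/2) *\<^sub>R (x + y)) \<le> (\<Phi> x + \<Phi> y) / 2 - c * (norm (x - y))\<^sup>2"
  shows "\<exists>p\<in>K. \<forall>v\<in>K. \<Phi> p \<le> \<Phi> v"
proof -
  define m where "m = Inf (\<Phi> ` K)"
  have m_le: "m \<le> \<Phi> v" if "v \<in> K" for v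
    unfolding m_def using bdd that by (simp add: cInf_lower)
  have "m \<in> closure (\<Phi> ` K)"
    unfolding m_def using K(1) bdd by (intro closure_contains_Inf) auto
  then obtain y where y: "\<And>n. y n \<in> \<Phi> ` K" and y_lim: "y \<longlonglongrightarrow> m"
    unfolding closure_sequential by blast
  have "\<forall>n. \<exists>x\<in>K. y n = \<Phi> x"
    using y by blast
  then obtain a where aK: "\<And>n. a n \<in> K" and "\<And>n. y n = \<Phi> (a n)"
    by metis
  then have "y = (\<lambda>n. \<Phi> (a n))"
    by (simp add: fun_eq_iff)
  with y_lim have a_lim: "(\<lambda>n. \<Phi> (a n)) \<longlonglongrightarrow> m"
    by simp
  have "Cauchy a"
  proof (rule CauchyI)
    fix e :: real assume "0 < e"
    then have "\<forall>\<^sub>F n in sequentially. \<Phi> (a n) < m + c * e\<^sup>2"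
      using c by (intro order_tendstoD(2)[OF a_lim]) simp
    then obtain N where N: "\<And>n. n \<ge> N \<Longrightarrow> \<Phi> (a n) < m + c * e\<^sup>2"
      unfolding eventually_sequentially by blast
    have "norm (a i - a k) < e" if "i \<ge> N" "k \<ge> N" for i k
    proof -
      have "c * (norm (a i - a k))\<^sup>2 \<le> (\<Phi> (a i) + \<Phi> (a k)) / 2 - m"
        using mid[OF aK aK, of i k] m_le[of "(1/2) *\<^sub>R (a i + a k)"]
          convexD[OF K(3) aK aK, of "1/2" "1/2" i k]
        by (simp add: scaleR_add_right)
      also have "\<dots> < c * e\<^sup>2"
        using N[OF that(1)] N[OF that(2)] by argo
      finally have "(norm (a i - a k))\<^sup>2 < e\<^sup>2"
        using c by simp
      then show ?thesis
        using \<open>0 < e\<close> by (simp add: power_less_imp_less_base)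
    qed
    then show "\<exists>M. \<forall>i\<ge>M. \<forall>k\<ge>M. norm (a i - a k) < e"
      by blast
  qed
  then obtain p where a_p: "a \<longlonglongrightarrow> p"
    using Cauchy_convergent_iff convergent_def by blast
  have pK: "p \<in> K"
    using closed_sequentially[OF K(2)] aK a_p by blast
  have "(\<lambda>n. \<Phi> (a n)) \<longlonglongrightarrow> \<Phi> p"
    using aK by (intro continuous_on_tendsto_compose[OF cont a_p pK]) simp
  then have "\<Phi> p = m"
    using a_lim by (rule LIMSEQ_unique)
  then show ?thesis
    using pK m_le by auto
qed

lemma evi_solution_id_if_minimizer:
  fixes K :: "'a::real_inner set"
  assumes K: "convex K" and \<phi>: "convex_on K \<phi>" and p: "p \<in> K"
    and min: "\<And>v. v \<in> K \<Longrightarrow> \<phi> p + (norm (p - h))\<^sup>2 / 2 \<le> \<phi> v + (norm (v - h))\<^sup>2 / 2"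
  shows "evi_solution K id \<phi> h p"
  unfolding evi_solution_def
proof (intro conjI ballI p)
  fix v assume v: "v \<in> K"
  define a where "a = inner (p - h) (v - p) + \<phi> v - \<phi> p"
  have "0 \<le> a + t * (norm (v - p))\<^sup>2 / 2" if t: "0 < t" "t < 1" for t
  proof -
    have eq: "(1 - t) *\<^sub>R p + t *\<^sub>R v = p + t *\<^sub>R (v - p)"
      by (simp add: algebra_simps)
    have "\<phi> p + (norm (p - h))\<^sup>2 / 2 \<le> \<phi> (p + t *\<^sub>R (v - p)) + (norm ((p - h) + t *\<^sub>R (v - p)))\<^sup>2 / 2"
      using min[of "p + t *\<^sub>R (v - p)"] convexD[OF K p v, of "1 - t" t] t
      by (simp add: eq algebra_simps)
    moreover have "\<phi> (p + t *\<^sub>R (v - p)) \<le> (1 - t) * \<phi> p + t * \<phi> v"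
      using convex_onD[OF \<phi>, of t p v] p v t by (simp add: eq)
    moreover have "t * a = t * inner (p - h) (v - p) + t * \<phi> v - t * \<phi> p"
      unfolding a_def by (simp only: ring_distribs)
    ultimately have "0 \<le> t * a + t\<^sup>2 * (norm (v - p))\<^sup>2 / 2"
      unfolding power2_norm_add_scaleR by (simp only: left_diff_distrib mult.assoc) argo
    also have "\<dots> = t * (a + t * (norm (v - p))\<^sup>2 / 2)"
      by (simp add: algebra_simps power2_eq_square)
    finally have "0 \<le> t * (a + t * (norm (v - p))\<^sup>2 / 2)" .
    then show ?thesis
      using t by (simp add: zero_le_mult_iff)
  qed
  then have "\<forall>\<^sub>F t in at_right 0. 0 \<le> a + t * (norm (v - p))\<^sup>2 / 2"
    using eventually_at_right_real[of 0 1] by (auto elim: eventually_mono)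
  moreover have "((\<lambda>t. a + t * (norm (v - p))\<^sup>2 / 2) \<longlongrightarrow> a) (at_right 0)"
    by (auto intro!: tendsto_eq_intros)
  ultimately have "0 \<le> a"
    by (intro tendsto_lowerbound) auto
  then show "0 \<le> inner (id p - h) (v - p) + \<phi> v - \<phi> p"
    by (simp add: a_def)
qed

lemma evi_solution_id_exists:
  fixes K :: "'a::{real_inner,complete_space} set"
  assumes K: "K \<noteq> {}" "closed K" "convex K" and \<phi>: "convex_on K \<phi>" "L-lipschitz_on K \<phi>"
  shows "\<exists>p. evi_solution K id \<phi> h p"
proof -
  define \<Phi> where "\<Phi> v = \<phi> v + (norm (v - h))\<^sup>2 / 2" for v
  obtain k where k: "k \<in> K"
    using K(1) by blast
  have "\<phi> k - L * norm (h - k) - L\<^sup>2 / 2 \<le> \<Phi> v" if v: "v \<in> K" for v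
  proof -
    have "\<phi> k - \<phi> v \<le> L * norm (v - k)"
      using lipschitz_on_normD[OF \<phi>(2) v k] by simp
    also have "\<dots> \<le> L * (norm (v - h) + norm (h - k))"
      using norm_triangle_ineq[of "v - h" "h - k"] lipschitz_on_nonneg[OF \<phi>(2)]
      by (intro mult_left_mono) auto
    finally have "\<phi> k - \<phi> v \<le> L * (norm (v - h) + norm (h - k))" .
    moreover have "L * norm (v - h) \<le> (norm (v - h))\<^sup>2 / 2 + L\<^sup>2 / 2"
      using sum_squares_ge_zero[of 0 "norm (v - h) - L"] by (simp add: power2_eq_square algebra_simps)
    ultimately show ?thesis
      unfolding \<Phi>_def by (simp add: distrib_left)
  qed
  then have "bdd_below (\<Phi> ` K)"
    by (intro bdd_belowI2)
  moreover have "continuous_on K \<Phi>"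
    unfolding \<Phi>_def using lipschitz_on_continuous_on[OF \<phi>(2)] by (intro continuous_intros) auto
  moreover have "\<Phi> ((1/2) *\<^sub>R (x + y)) \<le> (\<Phi> x + \<Phi> y) / 2 - 1/8 * (norm (x - y))\<^sup>2"
    if "x \<in> K" "y \<in> K" for x y
  proof -
    have "\<phi> ((1/2) *\<^sub>R (x + y)) \<le> \<phi> x / 2 + \<phi> y / 2"
      using convex_onD[OF \<phi>(1), of "1/2" x y] that by (simp add: scaleR_add_right)
    then show ?thesis
      unfolding \<Phi>_def power2_norm_midpoint_diff by argo
  qed
  ultimately obtain p where "p \<in> K" "\<And>v. v \<in> K \<Longrightarrow> \<Phi> p \<le> \<Phi> v"
    using midpoint_strongly_convex_attains_min[OF K, of \<Phi> "1/8"] by auto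
  then have "evi_solution K id \<phi> h p"
    unfolding \<Phi>_def by (intro evi_solution_id_if_minimizer[OF K(3) \<phi>(1)])
  then show ?thesis ..
qed

lemma evi_solution_dist_le:
  fixes A :: "'a::real_inner \<Rightarrow> 'a"
  assumes mono: "\<And>u v. inner (A u - A v) (u - v) \<ge> m * (norm (u - v))\<^sup>2"
    and p1: "evi_solution K A \<phi>1 g1 p1" and p2: "evi_solution K A \<phi>2 g2 p2"
    and cross: "\<phi>1 p2 - \<phi>1 p1 + \<phi>2 p1 - \<phi>2 p2 \<le> c * norm (p1 - p2)" and c: "0 \<le> c"
  shows "m * norm (p1 - p2) \<le> norm (g1 - g2) + c"
proof (cases "p1 = p2")
  case True
  then show ?thesis
    using c by simp
next
  case False
  have "0 \<le> inner (A p1 - g1) (p2 - p1) + inner (A p2 - g2) (p1 - p2)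
      + (\<phi>1 p2 - \<phi>1 p1 + \<phi>2 p1 - \<phi>2 p2)"
    using p1 p2 unfolding evi_solution_def by fastforce
  moreover have "inner (A p1 - g1) (p2 - p1) + inner (A p2 - g2) (p1 - p2)
      = inner (g1 - g2) (p1 - p2) - inner (A p1 - A p2) (p1 - p2)"
    by (simp add: inner_commute algebra_simps)
  ultimately have "m * (norm (p1 - p2))\<^sup>2 \<le> inner (g1 - g2) (p1 - p2) + c * norm (p1 - p2)"
    using mono[of p1 p2] cross by linarith
  also have "\<dots> \<le> (norm (g1 - g2) + c) * norm (p1 - p2)"
    using norm_cauchy_schwarz[of "g1 - g2" "p1 - p2"] by (simp add: algebra_simps)
  finally show ?thesis
    using False by (simp add: power2_eq_square)
qed

lemma evi_solution_unique:
  fixes A :: "'a::real_inner \<Rightarrow> 'a"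
  assumes "\<And>u v. inner (A u - A v) (u - v) \<ge> m * (norm (u - v))\<^sup>2" "0 < m"
    and "evi_solution K A \<phi> g p1" "evi_solution K A \<phi> g p2"
  shows "p1 = p2"
  using evi_solution_dist_le[OF assms(1,3,4), of 0] assms(2) by (simp add: mult_le_0_iff)

(* The max matters only for the zero space, where m > M is possible. *)
lemma forward_step_contraction:
  fixes A :: "'a::real_inner \<Rightarrow> 'a"
  assumes m: "0 \<le> m" and M: "0 < M"
    and mono: "\<And>u v. inner (A u - A v) (u - v) \<ge> m * (norm (u - v))\<^sup>2"
    and lip: "\<And>u v. norm (A u - A v) \<le> M * norm (u - v)"
  defines "\<rho> \<equiv> m / M\<^sup>2"
  shows "norm ((u1 - \<rho> *\<^sub>R (A u1 - g)) - (u2 - \<rho> *\<^sub>R (A u2 - g)))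
    \<le> sqrt (max 0 (1 - m\<^sup>2 / M\<^sup>2)) * norm (u1 - u2)"
proof -
  define d where "d = u1 - u2"
  define D where "D = A u1 - A u2"
  have "(norm (d - \<rho> *\<^sub>R D))\<^sup>2 = (norm d)\<^sup>2 - 2 * \<rho> * inner D d + \<rho>\<^sup>2 * (norm D)\<^sup>2"
    using power2_norm_add_scaleR[of d "- \<rho>" D] by (simp add: inner_commute)
  also have "\<dots> \<le> (norm d)\<^sup>2 - 2 * \<rho> * (m * (norm d)\<^sup>2) + \<rho>\<^sup>2 * (M * norm d)\<^sup>2"
  proof -
    have "m * (norm d)\<^sup>2 \<le> inner D d"
      using mono[of u1 u2] unfolding d_def D_def .
    then have "2 * \<rho> * (m * (norm d)\<^sup>2) \<le> 2 * \<rho> * inner D d"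
      by (rule mult_left_mono) (use m M in \<open>simp add: \<rho>_def\<close>)
    moreover have "(norm D)\<^sup>2 \<le> (M * norm d)\<^sup>2"
      using lip[of u1 u2] unfolding d_def D_def by (rule power_mono) simp
    then have "\<rho>\<^sup>2 * (norm D)\<^sup>2 \<le> \<rho>\<^sup>2 * (M * norm d)\<^sup>2"
      by (rule mult_left_mono) simp
    ultimately show ?thesis
      by linarith
  qed
  also have "\<dots> = (1 - m\<^sup>2 / M\<^sup>2) * (norm d)\<^sup>2"
    using M by (simp add: \<rho>_def power2_eq_square field_simps)
  also have "\<dots> \<le> (sqrt (max 0 (1 - m\<^sup>2 / M\<^sup>2)) * norm d)\<^sup>2"
    by (simp add: power_mult_distrib mult_right_mono)
  finally have "norm (d - \<rho> *\<^sub>R D) \<le> sqrt (max 0 (1 - m\<^sup>2 / M\<^sup>2)) * norm d"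
    by (rule power2_le_imp_le) simp
  moreover have "(u1 - \<rho> *\<^sub>R (A u1 - g)) - (u2 - \<rho> *\<^sub>R (A u2 - g)) = d - \<rho> *\<^sub>R D"
    unfolding d_def D_def by (simp add: algebra_simps)
  ultimately show ?thesis
    unfolding d_def by (simp only:)
qed

lemma evi_solution_exists:
  fixes K :: "'a::{real_inner,complete_space} set"
  assumes K: "K \<noteq> {}" "closed K" "convex K" and \<phi>: "convex_on K \<phi>" "L-lipschitz_on K \<phi>"
    and m: "0 < m" and M: "0 < M"
    and mono: "\<And>u v. inner (A u - A v) (u - v) \<ge> m * (norm (u - v))\<^sup>2"
    and lip: "\<And>u v. norm (A u - A v) \<le> M * norm (u - v)"
  shows "\<exists>p. evi_solution K A \<phi> g p"
proof -
  define \<rho> where "\<rho> = m / M\<^sup>2"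
  have \<rho>: "0 < \<rho>"
    using m M by (simp add: \<rho>_def)
  \<comment> \<open>The proximal map of \<open>\<rho> \<phi>\<close>; it is nonexpansive by the stability estimate for \<open>A = id\<close>.\<close>
  define P where "P h = (SOME p. evi_solution K id (\<lambda>v. \<rho> * \<phi> v) h p)" for h
  have P: "evi_solution K id (\<lambda>v. \<rho> * \<phi> v) h (P h)" for h
  proof -
    have "convex_on K (\<lambda>v. \<rho> * \<phi> v)"
      using \<rho> \<phi>(1) by (intro convex_on_cmul) auto
    moreover have "(\<rho> * L)-lipschitz_on K (\<lambda>v. \<rho> * \<phi> v)"
      using \<rho> \<phi>(2) by (intro lipschitz_intros) auto
    ultimately have "\<exists>p. evi_solution K id (\<lambda>v. \<rho> * \<phi> v) h p"
      by (rule evi_solution_id_exists[OF K])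
    then show ?thesis
      unfolding P_def by (rule someI_ex)
  qed
  have P_nonexp: "norm (P h1 - P h2) \<le> norm (h1 - h2)" for h1 h2
    using evi_solution_dist_le[where A = id and m = 1 and c = 0, OF _ P P]
    by (simp add: power2_norm_eq_inner)
  define k where "k = sqrt (max 0 (1 - m\<^sup>2 / M\<^sup>2))"
  have k: "0 \<le> k" "k < 1"
    using m M by (auto simp: k_def)
  define F where "F u = P (u - \<rho> *\<^sub>R (A u - g))" for u
  have "dist (F u1) (F u2) \<le> k * dist u1 u2" for u1 u2
  proof -
    have "dist (F u1) (F u2) \<le> norm ((u1 - \<rho> *\<^sub>R (A u1 - g)) - (u2 - \<rho> *\<^sub>R (A u2 - g)))"
      unfolding F_def dist_norm by (rule P_nonexp)
    also have "\<dots> \<le> k * dist u1 u2"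
      unfolding k_def \<rho>_def dist_norm by (rule forward_step_contraction[OF less_imp_le[OF m] M mono lip])
    finally show ?thesis .
  qed
  moreover have "F ` K \<subseteq> K"
    using P unfolding F_def evi_solution_def by blast
  moreover have "complete K"
    using K(2) by (simp add: complete_eq_closed)
  ultimately obtain u where "F u = u"
    using Banach_fix[OF _ K(1) k] by blast
  then have "evi_solution K id (\<lambda>v. \<rho> * \<phi> v) (u - \<rho> *\<^sub>R (A u - g)) u"
    using P unfolding F_def by metis
  moreover have "inner (id u - (u - \<rho> *\<^sub>R (A u - g))) (v - u) + \<rho> * \<phi> v - \<rho> * \<phi> u
      = \<rho> * (inner (A u - g) (v - u) + \<phi> v - \<phi> u)" for v
    by (simp add: algebra_simps)
  ultimately have "evi_solution K A \<phi> g u"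
    unfolding evi_solution_def using \<rho> by (simp only:) (simp add: zero_le_mult_iff)
  then show ?thesis ..
qed

lemma lipschitz_on_absI:
  fixes \<phi> :: "'a::real_normed_vector \<Rightarrow> real"
  assumes "\<And>v w. v \<in> K \<Longrightarrow> w \<in> K \<Longrightarrow> \<bar>\<phi> v - \<phi> w\<bar> \<le> L * norm (v - w)"
  shows "\<bar>L\<bar>-lipschitz_on K \<phi>"
proof (rule lipschitz_onI)
  fix v w assume "v \<in> K" "w \<in> K"
  then have "\<bar>\<phi> v - \<phi> w\<bar> \<le> L * norm (v - w)"
    by (rule assms)
  also have "\<dots> \<le> \<bar>L\<bar> * norm (v - w)"
    by (rule mult_right_mono) simp_all
  finally show "dist (\<phi> v) (\<phi> w) \<le> \<bar>L\<bar> * dist v w"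
    by (simp add: dist_norm dist_real_def)
qed simp

lemma evi_solution_map:
  fixes K :: "'a::{real_inner,complete_space} set" and \<phi> :: "'b::real_normed_vector \<Rightarrow> 'a \<Rightarrow> real"
  assumes K: "K \<noteq> {}" "closed K" "convex K"
    and \<phi>: "\<And>\<eta>. convex_on K (\<phi> \<eta>)" "\<And>\<eta>. \<exists>L. L-lipschitz_on K (\<phi> \<eta>)"
    and m: "0 < m" and M: "0 < M"
    and mono: "\<And>u v. inner (A u - A v) (u - v) \<ge> m * (norm (u - v))\<^sup>2"
    and lip: "\<And>u v. norm (A u - A v) \<le> M * norm (u - v)"
    and cross: "\<And>\<eta>1 \<eta>2 v1 v2. v1 \<in> K \<Longrightarrow> v2 \<in> K \<Longrightarrow>
      \<phi> \<eta>1 v2 - \<phi> \<eta>1 v1 + \<phi> \<eta>2 v1 - \<phi> \<eta>2 v2 \<le> \<alpha> * norm (\<eta>1 - \<eta>2) * norm (v1 - v2)"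
    and \<alpha>: "0 \<le> \<alpha>"
  obtains P where "\<And>\<eta> g p. evi_solution K A (\<phi> \<eta>) g p \<longleftrightarrow> P \<eta> g = p" "\<And>\<eta> g. P \<eta> g \<in> K"
    and "\<And>\<eta>1 \<eta>2 g1 g2. m * norm (P \<eta>1 g1 - P \<eta>2 g2) \<le> norm (g1 - g2) + \<alpha> * norm (\<eta>1 - \<eta>2)"
proof -
  have ex1: "\<exists>!p. evi_solution K A (\<phi> \<eta>) g p" for \<eta> g
  proof -
    obtain L where "L-lipschitz_on K (\<phi> \<eta>)"
      using \<phi>(2) by blast
    then obtain p where "evi_solution K A (\<phi> \<eta>) g p"
      using evi_solution_exists[OF K \<phi>(1) _ m M mono lip] by blast
    then show ?thesis
      using evi_solution_unique[OF mono m] by blast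
  qed
  define P where "P \<eta> g = (THE p. evi_solution K A (\<phi> \<eta>) g p)" for \<eta> g
  have P_iff: "evi_solution K A (\<phi> \<eta>) g p \<longleftrightarrow> P \<eta> g = p" for \<eta> g p
    unfolding P_def using theI'[OF ex1] the1_equality[OF ex1] by blast
  then have P: "evi_solution K A (\<phi> \<eta>) g (P \<eta> g)" for \<eta> g
    by blast
  then have P_K: "P \<eta> g \<in> K" for \<eta> g
    unfolding evi_solution_def by blast
  have P_dist: "m * norm (P \<eta>1 g1 - P \<eta>2 g2) \<le> norm (g1 - g2) + \<alpha> * norm (\<eta>1 - \<eta>2)" for \<eta>1 \<eta>2 g1 g2
    using \<alpha> P_K by (intro evi_solution_dist_le[OF mono P P cross]) auto
  show thesis
    by (rule that[OF P_iff P_K P_dist])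
qed


section \<open>The normal cone to C(eta, t)\<close>

lemma Cset_eq: "Cset K j \<eta> = {\<xi>. \<forall>v\<in>K. inner \<xi> v \<le> j \<eta> v}"
  unfolding Cset_def Jext_def by auto

lemma neg_mem_normal_cone_reflect_iff:
  "- w \<in> normal_cone ((\<lambda>\<xi>. a - \<xi>) ` C) z \<longleftrightarrow> w \<in> normal_cone C (a - z)"
proof -
  have "z \<in> (\<lambda>\<xi>. a - \<xi>) ` C \<longleftrightarrow> a - z \<in> C"
  proof
    assume "a - z \<in> C"
    then have "a - (a - z) \<in> (\<lambda>\<xi>. a - \<xi>) ` C"
      by (rule imageI)
    then show "z \<in> (\<lambda>\<xi>. a - \<xi>) ` C"
      by simp
  qed auto
  moreover have "inner (- w) ((a - \<xi>) - z) = inner w (\<xi> - (a - z))" for \<xi>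
    by (simp add: algebra_simps)
  ultimately show ?thesis
    unfolding normal_cone_def by auto
qed

lemma positively_homogeneous_zero:
  fixes \<phi> :: "'a::real_vector \<Rightarrow> real"
  assumes "0 \<in> K" "\<And>c v. 0 < c \<Longrightarrow> v \<in> K \<Longrightarrow> \<phi> (c *\<^sub>R v) = c * \<phi> v"
  shows "\<phi> 0 = 0"
  using assms(2)[of 2 0] assms(1) by simp

lemma sublinear_add_le:
  assumes K: "convex K" "cone K" and \<phi>: "convex_on K \<phi>"
    and hom: "\<And>c v. 0 < c \<Longrightarrow> v \<in> K \<Longrightarrow> \<phi> (c *\<^sub>R v) = c * \<phi> v"
    and x: "x \<in> K" and y: "y \<in> K"
  shows "\<phi> (x + y) \<le> \<phi> x + \<phi> y"
proof -
  define z where "z = (1 - 1/2) *\<^sub>R x + (1/2 :: real) *\<^sub>R y"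
  have "z \<in> K"
    unfolding z_def using convexD[OF K(1) x y] by simp
  moreover have "x + y = 2 *\<^sub>R z"
    by (simp add: z_def algebra_simps flip: scaleR_add_right)
  ultimately have "\<phi> (x + y) = 2 * \<phi> z"
    using hom by simp
  also have "\<dots> \<le> \<phi> x + \<phi> y"
    using convex_onD[OF \<phi>, of "1/2" x y] x y unfolding z_def by simp
  finally show ?thesis .
qed

lemma sublinear_variational_ineq_iff:
  assumes K: "convex K" "cone K" and \<phi>: "convex_on K \<phi>"
    and hom: "\<And>c v. 0 < c \<Longrightarrow> v \<in> K \<Longrightarrow> \<phi> (c *\<^sub>R v) = c * \<phi> v"
    and p: "p \<in> K"
  shows "(\<forall>v\<in>K. inner \<xi> (v - p) \<le> \<phi> v - \<phi> p) \<longleftrightarrow> (\<forall>v\<in>K. inner \<xi> v \<le> \<phi> v) \<and> inner \<xi> p = \<phi> p"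
proof
  assume vi: "\<forall>v\<in>K. inner \<xi> (v - p) \<le> \<phi> v - \<phi> p"
  have "0 \<in> K"
    using K(2) p cone_contains_0 by blast
  then have "\<phi> p \<le> inner \<xi> p"
    using vi positively_homogeneous_zero[of K \<phi>] hom by force
  moreover have "inner \<xi> p \<le> \<phi> p"
    using vi[rule_format, of "2 *\<^sub>R p"] K(2) p hom[of 2 p]
    by (simp add: cone_def algebra_simps)
  moreover have "inner \<xi> w \<le> \<phi> w" if w: "w \<in> K" for w
  proof -
    have "p + w \<in> K"
      using K p w convex_cone by blast
    then have "inner \<xi> w \<le> \<phi> (p + w) - \<phi> p"
      using vi by force
    then show ?thesis
      using sublinear_add_le[OF K \<phi> hom p w] by linarith
  qed
  ultimately show "(\<forall>v\<in>K. inner \<xi> v \<le> \<phi> v) \<and> inner \<xi> p = \<phi> p"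
    by auto
next
  assume "(\<forall>v\<in>K. inner \<xi> v \<le> \<phi> v) \<and> inner \<xi> p = \<phi> p"
  then show "\<forall>v\<in>K. inner \<xi> (v - p) \<le> \<phi> v - \<phi> p"
    by (simp add: inner_diff_right)
qed

lemma mem_normal_cone_subdifferential_iff:
  fixes K :: "'a::{real_inner,complete_space} set"
  assumes K: "K \<noteq> {}" "closed K" "convex K" "cone K"
    and \<phi>: "convex_on K \<phi>" "L-lipschitz_on K \<phi>"
    and hom: "\<And>c v. 0 < c \<Longrightarrow> v \<in> K \<Longrightarrow> \<phi> (c *\<^sub>R v) = c * \<phi> v"
  shows "w \<in> normal_cone {\<xi>. \<forall>v\<in>K. inner \<xi> v \<le> \<phi> v} \<xi> \<longleftrightarrow>
    w \<in> K \<and> (\<forall>v\<in>K. inner \<xi> (v - w) \<le> \<phi> v - \<phi> w)"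
  (is "_ \<in> normal_cone ?C \<xi> \<longleftrightarrow> _")
proof
  assume "w \<in> normal_cone ?C \<xi>"
  then have \<xi>: "\<xi> \<in> ?C" and max: "\<And>\<xi>'. \<xi>' \<in> ?C \<Longrightarrow> inner w \<xi>' \<le> inner w \<xi>"
    unfolding normal_cone_def by (auto split: if_splits simp: inner_diff_right)
  \<comment> \<open>\<open>w\<close> is recovered as the proximal point \<open>p\<close> of \<open>\<phi>\<close> at \<open>\<xi> + w\<close>.\<close>
  obtain p where "evi_solution K id \<phi> (\<xi> + w) p"
    using evi_solution_id_exists[OF K(1-3) \<phi>] by blast
  then have p: "p \<in> K" and "\<forall>v\<in>K. inner (\<xi> + w - p) (v - p) \<le> \<phi> v - \<phi> p"
    unfolding evi_solution_def by (auto simp: algebra_simps)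
  then have \<xi>p: "\<xi> + w - p \<in> ?C" "inner (\<xi> + w - p) p = \<phi> p"
    using sublinear_variational_ineq_iff[OF K(3,4) \<phi>(1) hom p] by auto
  have "inner w (w - p) \<le> 0"
    using max[OF \<xi>p(1)] by (simp add: inner_diff_right inner_add_right)
  moreover have "inner \<xi> p \<le> \<phi> p"
    using \<xi> p by simp
  then have "0 \<le> inner (w - p) p"
    using \<xi>p(2) by (simp add: inner_diff_left inner_add_left)
  ultimately have "(norm (w - p))\<^sup>2 \<le> 0"
    by (simp add: power2_norm_eq_inner inner_diff_left inner_diff_right inner_commute)
  then have "w = p"
    by simp
  then show "w \<in> K \<and> (\<forall>v\<in>K. inner \<xi> (v - w) \<le> \<phi> v - \<phi> w)"
    using \<xi> \<xi>p(2) p sublinear_variational_ineq_iff[OF K(3,4) \<phi>(1) hom p] by simp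
next
  assume "w \<in> K \<and> (\<forall>v\<in>K. inner \<xi> (v - w) \<le> \<phi> v - \<phi> w)"
  then have "w \<in> K" "\<xi> \<in> ?C" "inner \<xi> w = \<phi> w"
    using sublinear_variational_ineq_iff[OF K(3,4) \<phi>(1) hom] by auto
  then show "w \<in> normal_cone ?C \<xi>"
    unfolding normal_cone_def by (auto simp: inner_diff_right inner_commute)
qed

lemma neg_mem_normal_cone_Cset_t_iff:
  fixes K :: "'x::{real_inner,complete_space} set"
  assumes K: "K \<noteq> {}" "closed K" "convex K" "cone K"
    and j: "convex_on K (j \<eta>)" "\<exists>L. L-lipschitz_on K (j \<eta>)"
    and hom: "\<And>c v. 0 < c \<Longrightarrow> v \<in> K \<Longrightarrow> j \<eta> (c *\<^sub>R v) = c * j \<eta> v"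
  shows "- w \<in> normal_cone (Cset_t K j f \<eta> t) (A w + s) \<longleftrightarrow> evi_solution K A (j \<eta>) (f t - s) w"
proof -
  obtain L where L: "L-lipschitz_on K (j \<eta>)"
    using j(2) by blast
  have "- w \<in> normal_cone (Cset_t K j f \<eta> t) (A w + s)
      \<longleftrightarrow> w \<in> normal_cone {\<xi>. \<forall>v\<in>K. inner \<xi> v \<le> j \<eta> v} (f t - (A w + s))"
    unfolding Cset_t_def neg_mem_normal_cone_reflect_iff Cset_eq ..
  also have "\<dots> \<longleftrightarrow> w \<in> K \<and> (\<forall>v\<in>K. inner (f t - (A w + s)) (v - w) \<le> j \<eta> v - j \<eta> w)"
    by (rule mem_normal_cone_subdifferential_iff[OF K j(1) L hom])
  also have "\<dots> \<longleftrightarrow> evi_solution K A (j \<eta>) (f t - s) w"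
    unfolding evi_solution_def by (auto simp: algebra_simps)
  finally show ?thesis .
qed

section \<open>History-dependent fixed points\<close>

definition history_lipschitz :: "real set \<Rightarrow> real set \<Rightarrow> real \<Rightarrow> real \<Rightarrow>
    ((real \<Rightarrow> 'a::real_normed_vector) \<Rightarrow> real \<Rightarrow> 'b::real_normed_vector) \<Rightarrow> bool"
  where "history_lipschitz I J l L \<Phi> \<longleftrightarrow>
    (\<forall>u1 u2 t. continuous_on I u1 \<longrightarrow> continuous_on I u2 \<longrightarrow> t \<in> J \<longrightarrow>
      norm (\<Phi> u1 t - \<Phi> u2 t) \<le> l * norm (u1 t - u2 t) + L * integral {0..t} (\<lambda>s. norm (u1 s - u2 s)))"

lemma history_lipschitzD:
  assumes "history_lipschitz I J l L \<Phi>" "continuous_on I u1" "continuous_on I u2" "t \<in> J"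
  shows "norm (\<Phi> u1 t - \<Phi> u2 t) \<le> l * norm (u1 t - u2 t) + L * integral {0..t} (\<lambda>s. norm (u1 s - u2 s))"
  using assms unfolding history_lipschitz_def by blast

lemma continuous_on_if_initial_segments:
  fixes g :: "real \<Rightarrow> 'a::topological_space"
  assumes I: "I \<subseteq> {0..}" "\<And>t. t \<in> I \<Longrightarrow> {0..t} \<subseteq> I"
    and g: "\<And>t. t \<in> I \<Longrightarrow> continuous_on {0..t} g"
  shows "continuous_on I g"
proof (cases "\<exists>t\<in>I. \<forall>T\<in>I. T \<le> t")
  case True
  then obtain t where "t \<in> I" "\<forall>T\<in>I. T \<le> t"
    by blast
  then have "I = {0..t}"
    using I(1) I(2)[OF \<open>t \<in> I\<close>] by auto
  then show ?thesis
    using g \<open>t \<in> I\<close> by simp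
next
  case False
  show ?thesis
    unfolding continuous_on_eq_continuous_within
  proof
    fix t assume t: "t \<in> I"
    then obtain T where T: "T \<in> I" "t < T"
      using False by (meson not_le)
    have "I \<inter> {..<T} = {0..T} \<inter> {..<T}"
      using I(1) I(2)[OF T(1)] by auto
    then have "at t within I = at t within {0..T}"
      using T(2) by (intro at_within_nhd[of _ "{..<T}"]) auto
    moreover have "t \<in> {0..T}"
      using t T(2) I(1) by auto
    then have "continuous (at t within {0..T}) g"
      using g[OF T(1)] by (simp add: continuous_on_eq_continuous_within)
    ultimately show "continuous (at t within I) g"
      by simp
  qed
qed

lemma integral_exp_mult:
  fixes \<beta> s :: real
  assumes "0 < \<beta>" "0 \<le> s"
  shows "integral {0..s} (\<lambda>r. exp (\<beta> * r)) = (exp (\<beta> * s) - 1) / \<beta>"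
proof -
  have "((\<lambda>r. exp (\<beta> * r)) has_integral (exp (\<beta> * s) / \<beta> - exp (\<beta> * 0) / \<beta>)) {0..s}"
  proof (rule fundamental_theorem_of_calculus[OF assms(2)])
    fix x assume "x \<in> {0..s}"
    have "((\<lambda>r. exp (\<beta> * r) / \<beta>) has_real_derivative exp (\<beta> * x) * \<beta> / \<beta>) (at x within {0..s})"
      using assms(1) by (intro derivative_eq_intros) auto
    then show "((\<lambda>r. exp (\<beta> * r) / \<beta>) has_vector_derivative exp (\<beta> * x)) (at x within {0..s})"
      using assms(1) by (simp add: has_real_derivative_iff_has_vector_derivative)
  qed
  then show ?thesis
    by (simp add: integral_unique diff_divide_distrib)
qed

lemma integral_le_exp_bound:
  fixes d :: "real \<Rightarrow> real"
  assumes \<beta>: "0 < \<beta>" and c: "0 \<le> c" and s: "0 \<le> s"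
    and d: "continuous_on {0..s} d" "\<And>r. r \<in> {0..s} \<Longrightarrow> d r \<le> c * exp (\<beta> * r)"
  shows "integral {0..s} d \<le> c * exp (\<beta> * s) / \<beta>"
proof -
  have "integral {0..s} d \<le> integral {0..s} (\<lambda>r. c * exp (\<beta> * r))"
    using d by (intro integral_le integrable_continuous_interval continuous_intros) auto
  also have "\<dots> = c * (exp (\<beta> * s) - 1) / \<beta>"
    using integral_exp_mult[OF \<beta> s] by simp
  also have "\<dots> \<le> c * exp (\<beta> * s) / \<beta>"
    using c \<beta> by (simp add: divide_right_mono mult_left_mono)
  finally show ?thesis .
qed

lemma volterra_iteration_decay:
  fixes d :: "nat \<Rightarrow> real \<Rightarrow> real"
  assumes q: "0 \<le> q" "q < 1" and M: "0 \<le> M"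
    and cont: "\<And>n. continuous_on {0..T} (d n)"
    and rec: "\<And>n s. s \<in> {0..T} \<Longrightarrow> d (Suc n) s \<le> q * d n s + M * integral {0..s} (d n)"
  obtains \<theta> \<beta> D where "0 \<le> \<theta>" "\<theta> < 1" "0 < \<beta>" "0 < D"
    "\<And>n s. s \<in> {0..T} \<Longrightarrow> d n s \<le> \<theta>^n * D * exp (\<beta> * s)"
proof -
  \<comment> \<open>With respect to the weight \<open>exp (\<beta> * s)\<close> the recursion contracts by the factor \<open>\<theta> = q + M / \<beta>\<close>.\<close>
  define \<beta> where "\<beta> = 2 * M / (1 - q) + 1"
  define \<theta> where "\<theta> = q + M / \<beta>"
  have \<beta>: "0 < \<beta>"
    using q M unfolding \<beta>_def by (simp add: add_nonneg_pos)
  have "(1 - q) * \<beta> = 2 * M + (1 - q)"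
    using q unfolding \<beta>_def by (simp add: field_simps)
  then have "M < (1 - q) * \<beta>"
    using q M by linarith
  then have \<theta>: "0 \<le> \<theta>" "\<theta> < 1"
    using q M \<beta> unfolding \<theta>_def by (simp_all add: field_simps)
  have "bounded (d 0 ` {0..T})"
    by (intro compact_imp_bounded compact_continuous_image cont compact_Icc)
  then obtain D where "0 < D" and D: "\<forall>x\<in>d 0 ` {0..T}. norm x \<le> D"
    unfolding bounded_pos by blast
  have d0: "d 0 s \<le> D" if "s \<in> {0..T}" for s
  proof -
    have "norm (d 0 s) \<le> D"
      using D that by blast
    then show ?thesis
      by (simp add: abs_le_iff)
  qed
  have "d n s \<le> \<theta>^n * D * exp (\<beta> * s)" if "s \<in> {0..T}" for n s
    using that
  proof (induction n arbitrary: s)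
    case 0
    have "D \<le> D * exp (\<beta> * s)"
      using \<open>0 < D\<close> \<beta> 0 by simp
    then show ?case
      using d0[OF 0] by simp
  next
    case (Suc n)
    define c where "c = \<theta>^n * D"
    have c: "0 \<le> c"
      unfolding c_def using \<theta> \<open>0 < D\<close> by simp
    have "integral {0..s} (d n) \<le> c * exp (\<beta> * s) / \<beta>"
    proof (rule integral_le_exp_bound[OF \<beta> c])
      show "0 \<le> s" "continuous_on {0..s} (d n)"
        using Suc.prems continuous_on_subset[OF cont, of "{0..s}"] by auto
      show "d n r \<le> c * exp (\<beta> * r)" if "r \<in> {0..s}" for r
        using Suc.IH[of r] that Suc.prems by (simp add: c_def)
    qed
    then have "M * integral {0..s} (d n) \<le> M * (c * exp (\<beta> * s) / \<beta>)"
      by (rule mult_left_mono) (use M in simp)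
    moreover have "q * d n s \<le> q * (c * exp (\<beta> * s))"
      using Suc.IH[OF Suc.prems] q unfolding c_def by (simp add: mult_left_mono)
    ultimately have "d (Suc n) s \<le> q * (c * exp (\<beta> * s)) + M * (c * exp (\<beta> * s) / \<beta>)"
      using rec[of s n] Suc.prems by linarith
    also have "\<dots> = \<theta>^Suc n * D * exp (\<beta> * s)"
      unfolding c_def \<theta>_def by (simp add: field_simps)
    finally show ?case .
  qed
  then show ?thesis
    using that \<theta> \<beta> \<open>0 < D\<close> by blast
qed

lemma uniformly_Cauchy_on_summable_increments:
  fixes U :: "nat \<Rightarrow> 'b \<Rightarrow> 'a::real_normed_vector"
  assumes inc: "\<And>n x. x \<in> X \<Longrightarrow> norm (U (Suc n) x - U n x) \<le> c n" and c: "summable c"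
  shows "uniformly_Cauchy_on X U"
proof (rule uniformly_Cauchy_onI')
  fix e :: real
  assume "0 < e"
  then obtain N where N: "\<And>m n. N \<le> m \<Longrightarrow> norm (sum c {m..<n}) < e"
    using c unfolding summable_Cauchy by blast
  have "dist (U m x) (U n x) < e" if x: "x \<in> X" and mn: "N \<le> m" "m < n" for x m n
  proof -
    have "dist (U m x) (U n x) = norm (\<Sum>i = m..<n. U (Suc i) x - U i x)"
      using sum_Suc_diff'[of m n "\<lambda>i. U i x"] mn by (simp add: dist_norm norm_minus_commute)
    also have "\<dots> \<le> (\<Sum>i = m..<n. c i)"
      by (rule order_trans[OF norm_sum sum_mono]) (rule inc[OF x])
    also have "\<dots> < e"
      using N[OF mn(1), of n] by simp
    finally show ?thesis .
  qed
  then show "\<exists>M. \<forall>x\<in>X. \<forall>m\<ge>M. \<forall>n>m. dist (U m x) (U n x) < e"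
    by blast
qed

lemma uniform_limit_lim_if_uniformly_Cauchy:
  fixes U :: "nat \<Rightarrow> 'b \<Rightarrow> 'a::complete_space"
  assumes "uniformly_Cauchy_on X U"
  shows "uniform_limit X U (\<lambda>x. lim (\<lambda>n. U n x)) sequentially"
proof -
  obtain l where l: "uniform_limit X U l sequentially"
    using Cauchy_uniformly_convergent[OF assms] unfolding uniformly_convergent_on_def by blast
  moreover have "l x = lim (\<lambda>n. U n x)" if "x \<in> X" for x
    using tendsto_uniform_limitI[OF l that] by (simp add: limI)
  ultimately show ?thesis
    using uniform_limit_cong'[where g = U and h = l and i = "\<lambda>x. lim (\<lambda>n. U n x)"] by simp
qed

lemma history_lipschitz_fixed_points_eq:
  fixes \<Lambda> :: "(real \<Rightarrow> 'a::real_normed_vector) \<Rightarrow> real \<Rightarrow> 'a"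
  assumes hist: "history_lipschitz I {0..t} q M \<Lambda>" and q: "0 \<le> q" "q < 1" and M: "0 \<le> M"
    and t: "0 \<le> t" "{0..t} \<subseteq> I"
    and u: "continuous_on I u" "\<And>s. s \<in> {0..t} \<Longrightarrow> \<Lambda> u s = u s"
    and w: "continuous_on I w" "\<And>s. s \<in> {0..t} \<Longrightarrow> \<Lambda> w s = w s"
  shows "w t = u t"
proof -
  define d where "d = (\<lambda>s. norm (w s - u s))"
  have "continuous_on {0..t} d"
    unfolding d_def using continuous_on_subset[OF u(1) t(2)] continuous_on_subset[OF w(1) t(2)]
    by (intro continuous_intros)
  moreover have "d s \<le> q * d s + M * integral {0..s} d" if s: "s \<in> {0..t}" for s
  proof -
    have "norm (\<Lambda> w s - \<Lambda> u s) \<le> q * norm (w s - u s) + M * integral {0..s} (\<lambda>r. norm (w r - u r))"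
      by (rule history_lipschitzD[OF hist w(1) u(1) s])
    then show ?thesis
      using u(2)[OF s] w(2)[OF s] by (simp add: d_def)
  qed
  ultimately obtain \<theta> \<beta> D where \<theta>: "0 \<le> \<theta>" "\<theta> < 1" and "0 < \<beta>" "0 < D"
    and bound: "\<And>n s. s \<in> {0..t} \<Longrightarrow> d s \<le> \<theta>^n * D * exp (\<beta> * s)"
    by (rule volterra_iteration_decay[OF q M, of t "\<lambda>_. d"]) auto
  have "(\<lambda>n. \<theta>^n * D * exp (\<beta> * t)) \<longlonglongrightarrow> 0"
    using \<theta> by (intro tendsto_mult_left_zero LIMSEQ_power_zero) auto
  then have "d t \<le> 0"
    by (rule LIMSEQ_le_const) (use bound t(1) in auto)
  then show ?thesis
    by (simp add: d_def)
qed

lemma history_lipschitz_iterates_uniformly_Cauchy: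
  fixes \<Lambda> :: "(real \<Rightarrow> 'a::real_normed_vector) \<Rightarrow> real \<Rightarrow> 'a"
  assumes hist: "history_lipschitz I {0..T} q M \<Lambda>" and q: "0 \<le> q" "q < 1" and M: "0 \<le> M"
    and T: "0 \<le> T" "{0..T} \<subseteq> I"
    and U: "\<And>n. continuous_on I (U n)" "\<And>n. U (Suc n) = \<Lambda> (U n)"
  shows "uniformly_Cauchy_on {0..T} U"
proof -
  define d where "d = (\<lambda>n s. norm (U (Suc n) s - U n s))"
  have "continuous_on {0..T} (d n)" for n
    unfolding d_def using continuous_on_subset[OF U(1) T(2)] by (intro continuous_intros)
  moreover have "d (Suc n) s \<le> q * d n s + M * integral {0..s} (d n)" if s: "s \<in> {0..T}" for n s
  proof -
    have "norm (\<Lambda> (U (Suc n)) s - \<Lambda> (U n) s)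
        \<le> q * norm (U (Suc n) s - U n s) + M * integral {0..s} (\<lambda>r. norm (U (Suc n) r - U n r))"
      by (rule history_lipschitzD[OF hist U(1) U(1) s])
    then show ?thesis
      by (simp add: d_def U(2))
  qed
  ultimately obtain \<theta> \<beta> D where \<theta>: "0 \<le> \<theta>" "\<theta> < 1" and \<beta>: "0 < \<beta>" and "0 < D"
    and bound: "\<And>n s. s \<in> {0..T} \<Longrightarrow> d n s \<le> \<theta>^n * D * exp (\<beta> * s)"
    using volterra_iteration_decay[OF q M] by blast
  have "norm (U (Suc n) s - U n s) \<le> D * exp (\<beta> * T) * \<theta>^n" if "s \<in> {0..T}" for n s
  proof -
    have "exp (\<beta> * s) \<le> exp (\<beta> * T)"
      using that \<beta> by simp
    then have "\<theta>^n * D * exp (\<beta> * s) \<le> \<theta>^n * D * exp (\<beta> * T)"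
      by (rule mult_left_mono) (use \<theta> \<open>0 < D\<close> in simp)
    then show ?thesis
      using bound[OF that, of n] unfolding d_def by (simp add: algebra_simps)
  qed
  moreover have "summable (\<lambda>n. D * exp (\<beta> * T) * \<theta>^n)"
    using \<theta> by (intro summable_mult summable_geometric) simp
  ultimately show ?thesis
    by (rule uniformly_Cauchy_on_summable_increments)
qed

lemma history_lipschitz_uniform_limit_fixed:
  fixes \<Lambda> :: "(real \<Rightarrow> 'a::real_normed_vector) \<Rightarrow> real \<Rightarrow> 'a"
  assumes hist: "history_lipschitz I {0..t} q M \<Lambda>" and t: "0 \<le> t" "{0..t} \<subseteq> I"
    and U: "\<And>n. continuous_on I (U n)" "\<And>n. U (Suc n) = \<Lambda> (U n)"
    and u: "continuous_on I u" "uniform_limit {0..t} U u sequentially"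
  shows "\<Lambda> u t = u t"
proof -
  have "uniform_limit {0..t} (\<lambda>n s. norm (u s - U n s)) (\<lambda>s. 0) sequentially"
    using u(2) by (simp add: uniform_limit_iff dist_norm norm_minus_commute)
  moreover have "continuous_on {0..t} (\<lambda>s. norm (u s - U n s))" for n
    using continuous_on_subset[OF u(1) t(2)] continuous_on_subset[OF U(1) t(2)]
    by (intro continuous_intros)
  ultimately obtain J where J: "\<And>n. ((\<lambda>s. norm (u s - U n s)) has_integral J n) {0..t}"
    and "J \<longlonglongrightarrow> 0"
    by (rule uniform_limit_integral) (auto dest: has_integral_unique[OF has_integral_0])
  moreover have U_t: "(\<lambda>n. U n t) \<longlonglongrightarrow> u t"
    using tendsto_uniform_limitI[OF u(2)] t(1) by simp
  then have "(\<lambda>n. norm (U n t - u t)) \<longlonglongrightarrow> 0"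
    by (intro tendsto_norm_zero LIM_zero)
  ultimately have "(\<lambda>n. q * norm (U n t - u t) + M * J n) \<longlonglongrightarrow> q * 0 + M * 0"
    by (intro tendsto_add tendsto_mult_left)
  then have lim_bound: "(\<lambda>n. q * norm (U n t - u t) + M * J n) \<longlonglongrightarrow> 0"
    by simp
  have bound: "norm (U (Suc n) t - \<Lambda> u t) \<le> q * norm (U n t - u t) + M * J n" for n
  proof -
    have "norm (\<Lambda> u t - \<Lambda> (U n) t) \<le> q * norm (u t - U n t) + M * integral {0..t} (\<lambda>s. norm (u s - U n s))"
      using t(1) by (intro history_lipschitzD[OF hist u(1) U(1)]) simp
    then show ?thesis
      using integral_unique[OF J[of n]] by (simp add: U(2) norm_minus_commute)
  qed
  have "(\<lambda>n. U (Suc n) t - \<Lambda> u t) \<longlonglongrightarrow> 0"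
    by (rule Lim_null_comparison[OF always_eventually lim_bound]) (use bound in blast)
  then have "(\<lambda>n. U (Suc n) t) \<longlonglongrightarrow> \<Lambda> u t"
    by (rule LIM_zero_cancel)
  moreover have "(\<lambda>n. U (Suc n) t) \<longlonglongrightarrow> u t"
    using LIMSEQ_Suc[OF U_t] .
  ultimately show ?thesis
    by (rule LIMSEQ_unique)
qed

lemma history_dependent_fixed_point:
  fixes \<Lambda> :: "(real \<Rightarrow> 'a::{real_normed_vector,complete_space}) \<Rightarrow> real \<Rightarrow> 'a"
  assumes I: "I \<subseteq> {0..}" "\<And>t. t \<in> I \<Longrightarrow> {0..t} \<subseteq> I"
    and cont: "\<And>u. continuous_on I u \<Longrightarrow> continuous_on I (\<Lambda> u)"
    and hist: "\<And>t. t \<in> I \<Longrightarrow> \<exists>q M. 0 \<le> q \<and> q < 1 \<and> 0 \<le> M \<and> history_lipschitz I {0..t} q M \<Lambda>"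
  shows "\<exists>u. continuous_on I u \<and> (\<forall>t\<in>I. \<Lambda> u t = u t) \<and>
    (\<forall>w. continuous_on I w \<and> (\<forall>t\<in>I. \<Lambda> w t = w t) \<longrightarrow> (\<forall>t\<in>I. w t = u t))"
proof -
  define U where "U n = (\<Lambda> ^^ n) (\<lambda>_. 0)" for n
  have U_Suc: "U (Suc n) = \<Lambda> (U n)" for n
    by (simp add: U_def)
  have U_cont: "continuous_on I (U n)" for n
    by (induction n) (auto simp: U_def intro: cont)
  define u where "u x = lim (\<lambda>n. U n x)" for x
  have t0: "0 \<le> t" if "t \<in> I" for t
    using I(1) that by auto
  have u_lim: "uniform_limit {0..t} U u sequentially" if t: "t \<in> I" for t
  proof -
    obtain q M where "0 \<le> q" "q < 1" "0 \<le> M" "history_lipschitz I {0..t} q M \<Lambda>"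
      using hist[OF t] by blast
    then have "uniformly_Cauchy_on {0..t} U"
      using history_lipschitz_iterates_uniformly_Cauchy t0[OF t] I(2)[OF t] U_cont U_Suc by blast
    then show ?thesis
      unfolding u_def by (rule uniform_limit_lim_if_uniformly_Cauchy)
  qed
  have u_cont: "continuous_on I u"
  proof (rule continuous_on_if_initial_segments[OF I])
    fix t assume t: "t \<in> I"
    show "continuous_on {0..t} u"
      by (rule uniform_limit_theorem[OF _ u_lim[OF t]])
        (use continuous_on_subset[OF U_cont I(2)[OF t]] in auto)
  qed
  have u_fixed: "\<Lambda> u t = u t" if t: "t \<in> I" for t
    using hist[OF t] history_lipschitz_uniform_limit_fixed t0[OF t] I(2)[OF t] U_cont U_Suc
      u_cont u_lim[OF t] by blast
  have "w t = u t" if w: "continuous_on I w" "\<forall>t\<in>I. \<Lambda> w t = w t" and t: "t \<in> I" for w t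
    using hist[OF t] history_lipschitz_fixed_points_eq t0[OF t] I(2)[OF t] u_cont u_fixed w
    by blast
  then show ?thesis
    using u_cont u_fixed by blast
qed

lemma continuous_on_jointly_lipschitz:
  fixes P :: "'a::real_normed_vector \<Rightarrow> 'b::real_normed_vector \<Rightarrow> 'c::real_normed_vector"
  assumes P: "\<And>\<eta>1 \<eta>2 g1 g2. m * norm (P \<eta>1 g1 - P \<eta>2 g2) \<le> norm (g1 - g2) + \<alpha> * norm (\<eta>1 - \<eta>2)"
    and m: "0 < m" and \<alpha>: "0 \<le> \<alpha>"
    and \<eta>: "continuous_on I \<eta>" and g: "continuous_on I g"
  shows "continuous_on I (\<lambda>t. P (\<eta> t) (g t))"
proof -
  have "((1 + \<alpha>) / m)-lipschitz_on UNIV (\<lambda>z. P (fst z) (snd z))"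
  proof (rule lipschitz_onI)
    fix z w :: "'a \<times> 'b"
    have "m * dist (P (fst z) (snd z)) (P (fst w) (snd w)) \<le> dist (snd z) (snd w) + \<alpha> * dist (fst z) (fst w)"
      using P by (simp add: dist_norm)
    also have "\<dots> \<le> (1 + \<alpha>) * dist z w"
    proof -
      have "\<alpha> * dist (fst z) (fst w) \<le> \<alpha> * dist z w"
        using dist_fst_le \<alpha> by (rule mult_left_mono)
      then show ?thesis
        using dist_snd_le[of z w] by (simp add: distrib_right)
    qed
    finally show "dist (P (fst z) (snd z)) (P (fst w) (snd w)) \<le> (1 + \<alpha>) / m * dist z w"
      using m by (simp add: field_simps)
  qed (use m \<alpha> in simp)
  then have "continuous_on UNIV (\<lambda>z. P (fst z) (snd z))"
    by (rule lipschitz_on_continuous_on)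
  from continuous_on_compose2[OF this continuous_on_Pair[OF \<eta> g]] show ?thesis
    by simp
qed

lemma history_lipschitz_solution_map:
  fixes R :: "(real \<Rightarrow> 'a::real_normed_vector) \<Rightarrow> real \<Rightarrow> 'b::real_normed_vector"
    and S :: "(real \<Rightarrow> 'a) \<Rightarrow> real \<Rightarrow> 'c::real_normed_vector"
    and P :: "'b \<Rightarrow> 'c \<Rightarrow> 'd::real_normed_vector"
  assumes P: "\<And>\<eta>1 \<eta>2 g1 g2. m * norm (P \<eta>1 g1 - P \<eta>2 g2) \<le> norm (g1 - g2) + \<alpha> * norm (\<eta>1 - \<eta>2)"
    and m: "0 < m" and \<alpha>: "0 \<le> \<alpha>"
    and R: "history_lipschitz I J lR LR R" and S: "history_lipschitz I J lS LS S"
  shows "history_lipschitz I J ((\<alpha> * lR + lS) / m) ((\<alpha> * LR + LS) / m) (\<lambda>u t. P (R u t) (f t - S u t))"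
  unfolding history_lipschitz_def
proof (intro allI impI)
  fix u1 u2 :: "real \<Rightarrow> 'a" and t :: real
  assume u1: "continuous_on I u1" and u2: "continuous_on I u2" and t: "t \<in> J"
  define n where "n = norm (u1 t - u2 t)"
  define i where "i = integral {0..t} (\<lambda>s. norm (u1 s - u2 s))"
  have "m * norm (P (R u1 t) (f t - S u1 t) - P (R u2 t) (f t - S u2 t))
      \<le> norm (S u1 t - S u2 t) + \<alpha> * norm (R u1 t - R u2 t)"
    using P[of "R u1 t" "f t - S u1 t" "R u2 t" "f t - S u2 t"] by (simp add: norm_minus_commute)
  also have "\<dots> \<le> (lS * n + LS * i) + \<alpha> * (lR * n + LR * i)"
  proof -
    have "\<alpha> * norm (R u1 t - R u2 t) \<le> \<alpha> * (lR * n + LR * i)"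
      using history_lipschitzD[OF R u1 u2 t] \<alpha> unfolding n_def i_def by (rule mult_left_mono)
    then show ?thesis
      using history_lipschitzD[OF S u1 u2 t] unfolding n_def i_def by linarith
  qed
  also have "\<dots> = m * ((\<alpha> * lR + lS) / m * n + (\<alpha> * LR + LS) / m * i)"
    using m by (simp add: field_simps)
  finally show "norm (P (R u1 t) (f t - S u1 t) - P (R u2 t) (f t - S u2 t))
      \<le> (\<alpha> * lR + lS) / m * norm (u1 t - u2 t) + (\<alpha> * LR + LS) / m * integral {0..t} (\<lambda>s. norm (u1 s - u2 s))"
    using m unfolding n_def i_def by simp
qed

lemma solution_map_history_contraction:
  fixes R :: "(real \<Rightarrow> 'a::real_normed_vector) \<Rightarrow> real \<Rightarrow> 'b::real_normed_vector"
    and S :: "(real \<Rightarrow> 'a) \<Rightarrow> real \<Rightarrow> 'c::real_normed_vector"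
    and P :: "'b \<Rightarrow> 'c \<Rightarrow> 'd::real_normed_vector"
  assumes P: "\<And>\<eta>1 \<eta>2 g1 g2. m * norm (P \<eta>1 g1 - P \<eta>2 g2) \<le> norm (g1 - g2) + \<alpha> * norm (\<eta>1 - \<eta>2)"
    and m: "0 < m" and \<alpha>: "0 \<le> \<alpha>"
    and R: "history_lipschitz I J lR LR R" and S: "history_lipschitz I J lS LS S"
    and pos: "0 \<le> lR" "0 \<le> LR" "0 \<le> lS" "0 \<le> LS" and small: "(\<alpha> + 1) * (lR + lS) < m"
  shows "\<exists>q M. 0 \<le> q \<and> q < 1 \<and> 0 \<le> M \<and> history_lipschitz I J q M (\<lambda>u t. P (R u t) (f t - S u t))"
proof -
  define q where "q = (\<alpha> * lR + lS) / m"
  define M where "M = (\<alpha> * LR + LS) / m"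
  have "history_lipschitz I J q M (\<lambda>u t. P (R u t) (f t - S u t))"
    unfolding q_def M_def by (rule history_lipschitz_solution_map[OF P m \<alpha> R S])
  moreover have "0 \<le> q" "0 \<le> M"
    unfolding q_def M_def using pos \<alpha> m by simp_all
  moreover have "\<alpha> * lR + lS \<le> (\<alpha> + 1) * (lR + lS)"
    using pos \<alpha> by (simp add: algebra_simps)
  then have "q < 1"
    unfolding q_def using small m by simp
  ultimately show ?thesis
    by blast
qed

theorem theorem3p1:
  fixes I :: "real set" and T :: real
    and K :: "'x::{real_inner,complete_space} set"
    and A :: "'x \<Rightarrow> 'x" and mA LA :: real
    and R :: "(real \<Rightarrow> 'x) \<Rightarrow> (real \<Rightarrow> 'y::{real_inner,complete_space})"
    and S :: "(real \<Rightarrow> 'x) \<Rightarrow> (real \<Rightarrow> 'x)"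
    and j :: "'y \<Rightarrow> 'x \<Rightarrow> real" and \<alpha>j :: real
    and f :: "real \<Rightarrow> 'x"
  assumes I_def: "(T > 0 \<and> I = {0..T}) \<or> I = {0..}"
    and K_ne: "K \<noteq> {}" and K_closed: "closed K" and K_convex: "convex K" and K_cone: "cone K"
    and mA_pos: "mA > 0" and LA_pos: "LA > 0"
    and A_mono: "\<And>u v. inner (A u - A v) (u - v) \<ge> mA * (norm (u - v))\<^sup>2"
    and A_lip: "\<And>u v. norm (A u - A v) \<le> LA * norm (u - v)"
    and R_cont: "\<And>u. continuous_on I u \<Longrightarrow> continuous_on I (R u)"
    and S_cont: "\<And>u. continuous_on I u \<Longrightarrow> continuous_on I (S u)"
    and RS_est: "\<And>J. compact J \<Longrightarrow> J \<subseteq> I \<Longrightarrow>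
        \<exists>lR LR lS LS. lR > 0 \<and> LR > 0 \<and> lS > 0 \<and> LS > 0 \<and>
          (\<forall>u1 u2 t. continuous_on I u1 \<longrightarrow> continuous_on I u2 \<longrightarrow> t \<in> J \<longrightarrow>
             norm (R u1 t - R u2 t) \<le> lR * norm (u1 t - u2 t)
               + LR * integral {0..t} (\<lambda>s. norm (u1 s - u2 s))) \<and>
          (\<forall>u1 u2 t. continuous_on I u1 \<longrightarrow> continuous_on I u2 \<longrightarrow> t \<in> J \<longrightarrow>
             norm (S u1 t - S u2 t) \<le> lS * norm (u1 t - u2 t)
               + LS * integral {0..t} (\<lambda>s. norm (u1 s - u2 s))) \<and>
          (\<alpha>j + 1) * (lR + lS) < mA"
    and j_convex: "\<And>\<eta>. convex_on K (j \<eta>)"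
    and j_poshom: "\<And>\<eta> c v. c > 0 \<Longrightarrow> v \<in> K \<Longrightarrow> j \<eta> (c *\<^sub>R v) = c * j \<eta> v"
    and j_lip: "\<And>\<eta>. \<exists>L. \<forall>v\<in>K. \<forall>w\<in>K. \<bar>j \<eta> v - j \<eta> w\<bar> \<le> L * norm (v - w)"
    and \<alpha>j_nonneg: "\<alpha>j \<ge> 0"
    and j_est: "\<And>\<eta>1 \<eta>2 v1 v2. v1 \<in> K \<Longrightarrow> v2 \<in> K \<Longrightarrow>
        j \<eta>1 v2 - j \<eta>1 v1 + j \<eta>2 v1 - j \<eta>2 v2 \<le> \<alpha>j * norm (\<eta>1 - \<eta>2) * norm (v1 - v2)"
    and f_cont: "continuous_on I f"
  shows "\<exists>u. continuous_on I u \<and> (\<forall>t\<in>I. u t \<in> K) \<and>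
           (\<forall>t\<in>I. - u t \<in> normal_cone (Cset_t K j f (R u t) t) (A (u t) + S u t)) \<and>
           (\<forall>w. continuous_on I w \<and>
                (\<forall>t\<in>I. - w t \<in> normal_cone (Cset_t K j f (R w t) t) (A (w t) + S w t))
                \<longrightarrow> (\<forall>t\<in>I. w t = u t))"
proof -
  have I: "I \<subseteq> {0..}" "\<And>t. t \<in> I \<Longrightarrow> {0..t} \<subseteq> I"
    using I_def by auto
  have j_lipschitz: "\<exists>L. L-lipschitz_on K (j \<eta>)" for \<eta>
    using j_lip[of \<eta>] lipschitz_on_absI by metis
  obtain P where P: "\<And>\<eta> g p. evi_solution K A (j \<eta>) g p \<longleftrightarrow> P \<eta> g = p"
    and P_K: "\<And>\<eta> g. P \<eta> g \<in> K"
    and P_dist: "\<And>\<eta>1 \<eta>2 g1 g2. mA * norm (P \<eta>1 g1 - P \<eta>2 g2) \<le> norm (g1 - g2) + \<alpha>j * norm (\<eta>1 - \<eta>2)"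
    using evi_solution_map[OF K_ne K_closed K_convex j_convex j_lipschitz mA_pos LA_pos A_mono A_lip
        j_est \<alpha>j_nonneg] by blast
  define \<Lambda> where "\<Lambda> u t = P (R u t) (f t - S u t)" for u t
  have "continuous_on I (\<Lambda> u)" if "continuous_on I u" for u
    unfolding \<Lambda>_def using R_cont[OF that] S_cont[OF that] f_cont
    by (intro continuous_on_jointly_lipschitz[OF P_dist mA_pos \<alpha>j_nonneg] continuous_intros)
  moreover have "\<exists>q M. 0 \<le> q \<and> q < 1 \<and> 0 \<le> M \<and> history_lipschitz I {0..t} q M \<Lambda>" if "t \<in> I" for t
  proof -
    obtain lR LR lS LS where "0 < lR" "0 < LR" "0 < lS" "0 < LS" "(\<alpha>j + 1) * (lR + lS) < mA"
      and R: "history_lipschitz I {0..t} lR LR R" and S: "history_lipschitz I {0..t} lS LS S"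
      using RS_est[OF compact_Icc I(2)[OF \<open>t \<in> I\<close>]] unfolding history_lipschitz_def by blast
    then show ?thesis
      unfolding \<Lambda>_def by (intro solution_map_history_contraction[OF P_dist mA_pos \<alpha>j_nonneg R S]) auto
  qed
  ultimately obtain u where u: "continuous_on I u" "\<forall>t\<in>I. \<Lambda> u t = u t"
    and u_unique: "\<forall>w. continuous_on I w \<and> (\<forall>t\<in>I. \<Lambda> w t = w t) \<longrightarrow> (\<forall>t\<in>I. w t = u t)"
    using history_dependent_fixed_point[OF I] by blast
  have inclusion_iff: "(\<forall>t\<in>I. - w t \<in> normal_cone (Cset_t K j f (R w t) t) (A (w t) + S w t))
      \<longleftrightarrow> (\<forall>t\<in>I. \<Lambda> w t = w t)" for w
    using neg_mem_normal_cone_Cset_t_iff[where A = A and j = j,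
        OF K_ne K_closed K_convex K_cone j_convex j_lipschitz j_poshom]
    by (simp add: P \<Lambda>_def)
  have "\<forall>t\<in>I. u t \<in> K"
    using P_K u(2) unfolding \<Lambda>_def by metis
  then show ?thesis
    unfolding inclusion_iff using u u_unique by blast
qed

end
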